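(* Let $M$ be a cubic $3$-pole (loops and parallel edges allowed) with exactly three dangling edges, incident with three pairwise distinct vertices $v_1,v_2,v_3$. For each vertex $x$ of $M$ choose an even $(2,2,2)$-pole $H_x$ and a bijection between the three connectors of $H_x$ and the three edge ends at $x$. Construct the $(2,2,2)$-pole $H_M(S_1,S_2,S_3)$ by replacing every vertex $x$ by $H_x$ and every edge of $M$ by two parallel "strands": for each edge of $M$ joining ends at $x$ and $y$ (possibly $x=y$ for a loop), perform the junction of the connector of $H_x$ assigned to the first end with the connector of $H_y$ assigned to the second end; for the dangling edge at $v_i$, the connector of $H_{v_i}$ assigned to that dangling edge is left unjoined and becomes $S_i$. Then $H_M(S_1,S_2,S_3)$ is an even $(2,2,2)$-pole.
   Context: A multipole consists of vertices and edges; each edge has two ends, each either incident with a vertex or free; a free end is a semiedge. All multipoles are cubic (every vertex incident with exactly three edge ends). Semiedges are partitioned into connectors; a $(2,2,2)$-pole has three connectors of size $2$. The junction of two connectors of size $2$ identifies their semiedges in pairs (along an arbitrary bijection) to form two edges. Let $\mathbb{K}=\{(0,1),(1,0),(1,1)\}\subset\mathbb{Z}_2\times\mathbb{Z}_2$. A colouring of a multipole assigns elements of $\mathbb{K}$ to edges so that at every vertex the three incident edge ends get distinct colours. Flow through a connector $S$: $\varphi_*(S)=\sum_{e\in S}\varphi(e)\in\mathbb{Z}_2\times\mathbb{Z}_2$. A $(2,2,2)$-pole is even if for every colouring $\varphi$ the number of its connectors $S$ with $\varphi_*(S)\ne0$ is even. *)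

theory Defs
  imports Main "HOL-Library.Z2" "HOL-Library.Product_Plus"
begin

text \<open>A multipole: vertices, edge ends (darts), incidence of ends with vertices
  (None = free end, i.e. a semiedge), and the involution pairing the two ends of each edge.\<close>
record ('v,'d) mpole =
  verts :: "'v set"
  darts :: "'d set"
  inc :: "'d \<Rightarrow> 'v option"
  mate :: "'d \<Rightarrow> 'd"

definition multipole :: "('v,'d) mpole \<Rightarrow> bool" where
  "multipole P \<longleftrightarrow> finite (verts P) \<and> finite (darts P) \<and>
     (\<forall>d\<in>darts P. mate P d \<in> darts P \<and> mate P d \<noteq> d \<and> mate P (mate P d) = d \<and>
        (\<forall>u. inc P d = Some u \<longrightarrow> u \<in> verts P))"

definition cubic :: "('v,'d) mpole \<Rightarrow> bool" where
  "cubic P \<longleftrightarrow> (\<forall>v\<in>verts P. card {d\<in>darts P. inc P d = Some v} = 3)"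

definition semiedges :: "('v,'d) mpole \<Rightarrow> 'd set" where
  "semiedges P = {d\<in>darts P. inc P d = None}"

definition pole222 :: "('v,'d) mpole \<Rightarrow> (nat \<Rightarrow> 'd set) \<Rightarrow> bool" where
  "pole222 P C \<longleftrightarrow> multipole P \<and> cubic P \<and>
     (\<forall>i<3. C i \<subseteq> semiedges P \<and> card (C i) = 2) \<and>
     (\<forall>i<3. \<forall>j<3. i \<noteq> j \<longrightarrow> C i \<inter> C j = {}) \<and>
     (\<Union>i<3. C i) = semiedges P"

definition K :: "(bit \<times> bit) set" where
  "K = {(0,1), (1,0), (1,1)}"

definition colouring :: "('v,'d) mpole \<Rightarrow> ('d \<Rightarrow> bit \<times> bit) \<Rightarrow> bool" where
  "colouring P \<phi> \<longleftrightarrow>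
     (\<forall>d\<in>darts P. \<phi> d \<in> K \<and> \<phi> (mate P d) = \<phi> d) \<and>
     (\<forall>v\<in>verts P. inj_on \<phi> {d\<in>darts P. inc P d = Some v})"

definition flow :: "('d \<Rightarrow> bit \<times> bit) \<Rightarrow> 'd set \<Rightarrow> bit \<times> bit" where
  "flow \<phi> S = (\<Sum>d\<in>S. \<phi> d)"

definition even222 :: "('v,'d) mpole \<Rightarrow> (nat \<Rightarrow> 'd set) \<Rightarrow> bool" where
  "even222 P C \<longleftrightarrow>
     (\<forall>\<phi>. colouring P \<phi> \<longrightarrow> even (card {i\<in>{0..<3}. flow \<phi> (C i) \<noteq> 0}))"

text \<open>Construction H_M. M: the 3-pole; CH x: connectors of H_x; \<sigma> x: bijection from
  connector indices {0,1,2} onto the ends of M at x; J e: junction bijection used for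
  the edge end e.\<close>

definition aconn :: "('w,'m) mpole \<Rightarrow> ('w \<Rightarrow> nat \<Rightarrow> 'd set) \<Rightarrow> ('w \<Rightarrow> nat \<Rightarrow> 'm) \<Rightarrow> 'm \<Rightarrow> 'd set" where
  "aconn M CH \<sigma> e = (let x = the (inc M e) in CH x (the_inv_into {0..<3} (\<sigma> x) e))"

definition joined :: "('w,'m) mpole \<Rightarrow> ('w \<Rightarrow> nat \<Rightarrow> 'd set) \<Rightarrow> ('w \<Rightarrow> nat \<Rightarrow> 'm) \<Rightarrow> 'w \<Rightarrow> 'd \<Rightarrow> bool" where
  "joined M CH \<sigma> x d \<longleftrightarrow>
     (\<exists>e\<in>darts M. inc M e = Some x \<and> inc M (mate M e) \<noteq> None \<and> d \<in> aconn M CH \<sigma> e)"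

definition glink :: "('w,'m) mpole \<Rightarrow> ('w \<Rightarrow> ('v,'d) mpole) \<Rightarrow> ('w \<Rightarrow> nat \<Rightarrow> 'd set) \<Rightarrow>
    ('w \<Rightarrow> nat \<Rightarrow> 'm) \<Rightarrow> ('m \<Rightarrow> 'd \<Rightarrow> 'd) \<Rightarrow> (('w \<times> 'd) \<times> ('w \<times> 'd)) set" where
  "glink M H CH \<sigma> J =
     {((x,d),(x, mate (H x) d)) | x d. x \<in> verts M \<and> d \<in> darts (H x)} \<union>
     {((x,d),(y, J e d)) | x y e d. e \<in> darts M \<and> inc M e = Some x \<and>
          inc M (mate M e) = Some y \<and> d \<in> aconn M CH \<sigma> e}"

definition HM_darts :: "('w,'m) mpole \<Rightarrow> ('w \<Rightarrow> ('v,'d) mpole) \<Rightarrow> ('w \<Rightarrow> nat \<Rightarrow> 'd set) \<Rightarrow>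
    ('w \<Rightarrow> nat \<Rightarrow> 'm) \<Rightarrow> ('w \<times> 'd) set" where
  "HM_darts M H CH \<sigma> =
     {(x,d). x \<in> verts M \<and> d \<in> darts (H x) \<and> \<not> joined M CH \<sigma> x d}"

text \<open>The resulting multipole: an edge of H_M is a maximal chain of edges of the H_x glued
  by junctions; its two ends are the two non-joined ends of the chain.\<close>
definition HM :: "('w,'m) mpole \<Rightarrow> ('w \<Rightarrow> ('v,'d) mpole) \<Rightarrow> ('w \<Rightarrow> nat \<Rightarrow> 'd set) \<Rightarrow>
    ('w \<Rightarrow> nat \<Rightarrow> 'm) \<Rightarrow> ('m \<Rightarrow> 'd \<Rightarrow> 'd) \<Rightarrow> ('w \<times> 'v, 'w \<times> 'd) mpole" where
  "HM M H CH \<sigma> J =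
     \<lparr> verts = Sigma (verts M) (\<lambda>x. verts (H x)),
       darts = HM_darts M H CH \<sigma>,
       inc = (\<lambda>(x,d). map_option (Pair x) (inc (H x) d)),
       mate = (\<lambda>a. THE b. b \<in> HM_darts M H CH \<sigma> \<and> b \<noteq> a \<and> (a,b) \<in> (glink M H CH \<sigma> J)\<^sup>*) \<rparr>"

definition HM_conn :: "('w,'m) mpole \<Rightarrow> ('w \<Rightarrow> nat \<Rightarrow> 'd set) \<Rightarrow> ('w \<Rightarrow> nat \<Rightarrow> 'm) \<Rightarrow>
    (nat \<Rightarrow> 'm) \<Rightarrow> nat \<Rightarrow> ('w \<times> 'd) set" where
  "HM_conn M CH \<sigma> s i =
     Pair (the (inc M (mate M (s i)))) ` aconn M CH \<sigma> (mate M (s i))"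

end

theory Submission
  imports Defs "HOL-Library.Disjoint_Sets" "HOL-Combinatorics.Orbits"
begin

(*
  A colouring of H_M is constant along each strand, i.e. each maximal chain of edges of the
  H_x glued by junctions, so it induces colourings of all the H_x.  For an end e of M at x let
  F(e) be the flow of the induced colouring through the connector of H_x assigned to e.  As
  every H_x is even, the ends e with F(e) \<noteq> 0 at any one vertex are evenly many; the two ends
  of an edge of M between vertices have the same F, because a junction identifies semiedges of
  equal colour.  Hence evenly many dangling ends have F(e) \<noteq> 0, and these flows are exactly
  the flows through S_1, S_2, S_3.  That H_M is a multipole at all rests on the fact that the
  strand starting at an unjoined end reaches exactly one other unjoined end.
*)

locale involution_pair =
  fixes U :: "'a set" and \<alpha> \<beta> :: "'a \<Rightarrow> 'a"
  assumes finite_U: "finite U"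
    and \<alpha>_closed: "p \<in> U \<Longrightarrow> \<alpha> p \<in> U" and \<alpha>_involution: "p \<in> U \<Longrightarrow> \<alpha> (\<alpha> p) = p"
    and \<alpha>_no_fixpoint: "p \<in> U \<Longrightarrow> \<alpha> p \<noteq> p"
    and \<beta>_closed: "p \<in> U \<Longrightarrow> \<beta> p \<in> U" and \<beta>_involution: "p \<in> U \<Longrightarrow> \<beta> (\<beta> p) = p"
begin

definition steps :: "'a rel" where
  "steps = {(p, \<alpha> p) |p. p \<in> U} \<union> {(p, \<beta> p) |p. p \<in> U}"

definition rot :: "'a \<Rightarrow> 'a" where
  "rot = perm_restrict (\<alpha> \<circ> \<beta>) U"

lemma rot_apply: "p \<in> U \<Longrightarrow> rot p = \<alpha> (\<beta> p)"
  by (simp add: rot_def perm_restrict_def)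

lemma rot_permutes: "rot permutes U"
proof (rule bij_imp_permutes)
  show "bij_betw rot U U"
    by (rule bij_betw_byWitness[where f' = "\<beta> \<circ> \<alpha>"])
      (auto simp: rot_apply \<alpha>_closed \<alpha>_involution \<beta>_closed \<beta>_involution)
qed (simp add: rot_def perm_restrict_def)

lemma rot_funpow_closed: "p \<in> U \<Longrightarrow> (rot ^^ k) p \<in> U"
  by (induction k) (auto simp: rot_apply \<alpha>_closed \<beta>_closed)

text \<open>Conjugation by \<open>\<beta>\<close> inverts \<open>rot\<close>.\<close>
lemma rot_funpow_reflect:
  assumes "p \<in> U" shows "(rot ^^ k) (\<beta> ((rot ^^ k) p)) = \<beta> p"
proof (induction k)
  case (Suc k)
  have "(rot ^^ Suc k) (\<beta> ((rot ^^ Suc k) p)) = (rot ^^ k) (rot (\<beta> (rot ((rot ^^ k) p))))"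
    by (simp add: funpow_swap1)
  also have "rot (\<beta> (rot ((rot ^^ k) p))) = \<beta> ((rot ^^ k) p)"
    using rot_funpow_closed[OF assms, of k]
    by (simp add: rot_apply \<alpha>_closed \<alpha>_involution \<beta>_closed \<beta>_involution)
  finally show ?case using Suc by simp
qed simp

lemma steps_sym: "(p, q) \<in> steps \<Longrightarrow> (q, p) \<in> steps"
  by (auto simp: steps_def \<alpha>_closed \<alpha>_involution \<beta>_closed \<beta>_involution
      intro: exI[of _ "\<alpha> p"] exI[of _ "\<beta> p"])

lemma steps_closed: "(p, q) \<in> steps\<^sup>* \<Longrightarrow> p \<in> U \<Longrightarrow> q \<in> U"
  by (induction rule: rtrancl_induct) (auto simp: steps_def \<alpha>_closed \<beta>_closed)

lemma steps_rot_funpow: "p \<in> U \<Longrightarrow> (p, (rot ^^ k) p) \<in> steps\<^sup>*"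
proof (induction k)
  case (Suc k)
  let ?q = "(rot ^^ k) p"
  have "(?q, \<beta> ?q) \<in> steps" "(\<beta> ?q, (rot ^^ Suc k) p) \<in> steps"
    using rot_funpow_closed[OF Suc.prems] \<beta>_closed by (auto simp: steps_def rot_apply)
  then show ?case using Suc by (meson rtrancl_into_rtrancl)
qed simp

end

locale involution_chain = involution_pair +
  fixes a assumes a_in: "a \<in> U" and \<beta>_a: "\<beta> a = a"
begin

definition period :: nat where
  "period = funpow_dist1 rot a a"

lemma a_in_orbit: "a \<in> orbit rot a"
  using rot_permutes finite_U by (metis permutation_permutes permutation_self_in_orbit)

lemma period: "0 < period" "(rot ^^ period) a = a"
  using funpow_dist1_prop[OF a_in_orbit] by (simp_all add: period_def)

lemma inj_on_rot_funpow: "inj_on (\<lambda>k. (rot ^^ k) a) {0..<period}"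
  unfolding period_def by (rule inj_on_funpow_dist1[OF a_in_orbit])

lemma \<beta>_rot_funpow:
  assumes "k \<le> period" shows "\<beta> ((rot ^^ k) a) = (rot ^^ (period - k)) a"
proof -
  have "inj (rot ^^ k)"
    using rot_permutes by (simp add: permutes_inj)
  moreover have "(rot ^^ k) (\<beta> ((rot ^^ k) a)) = (rot ^^ k) ((rot ^^ (period - k)) a)"
    using rot_funpow_reflect[OF a_in, of k] assms period(2) \<beta>_a
    by (simp flip: funpow_add[THEN fun_cong, unfolded comp_def])
  ultimately show ?thesis by (simp add: inj_eq)
qed

lemma \<alpha>_rot_funpow:
  assumes "k \<le> period" shows "\<alpha> ((rot ^^ Suc k) a) = (rot ^^ (period - k)) a"
  using rot_funpow_closed[OF a_in, of k] \<beta>_closed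
  by (simp add: rot_apply \<alpha>_involution flip: \<beta>_rot_funpow[OF assms])

lemma even_period: "even period"
proof (rule ccontr)
  assume "odd period"
  then obtain m where "period = 2 * m + 1" using oddE by blast
  then have "\<alpha> ((rot ^^ Suc m) a) = (rot ^^ Suc m) a" using \<alpha>_rot_funpow[of m] by simp
  then show False using \<alpha>_no_fixpoint rot_funpow_closed[OF a_in] by blast
qed

lemma steps_from_a_rot_funpow:
  assumes "(a, c) \<in> steps\<^sup>*" shows "\<exists>k<period. c = (rot ^^ k) a"
  using assms
proof (induction rule: rtrancl_induct)
  case base
  show ?case using period(1) by (intro exI[of _ 0]) simp
next
  case (step c c')
  then obtain k where k: "k < period" "c = (rot ^^ k) a" by blast
  have "\<exists>j. c' = (rot ^^ j) a"
  proof (cases k)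
    case 0
    then have "c' = \<alpha> a \<or> c' = a" using step(2) k \<beta>_a by (auto simp: steps_def)
    moreover have "\<alpha> a = (rot ^^ 1) a" using a_in \<beta>_a by (simp add: rot_apply)
    ultimately show ?thesis by (metis funpow_0)
  next
    case (Suc j)
    then have "c' = \<alpha> ((rot ^^ Suc j) a) \<or> c' = \<beta> ((rot ^^ k) a)"
      using step(2) k by (auto simp: steps_def)
    then show ?thesis using \<alpha>_rot_funpow[of j] \<beta>_rot_funpow[of k] k Suc by (metis Suc_leD less_imp_le)
  qed
  then obtain j where "c' = (rot ^^ j) a" by blast
  then show ?case using funpow_mod_eq[of period rot a j] period by (intro exI[of _ "j mod period"]) auto
qed

text \<open>The \<open>steps\<close>-component of \<open>a\<close> is the \<open>rot\<close>-orbit of \<open>a\<close>, on which \<open>\<beta>\<close> acts as the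
  reflection \<open>k \<mapsto> period - k\<close>; its fixed points are \<open>k = 0\<close> and \<open>k = period div 2\<close>.\<close>
theorem chain_ends:
  obtains b where "b \<noteq> a" and "{c. (a, c) \<in> steps\<^sup>* \<and> \<beta> c = c} = {a, b}"
proof -
  obtain m where m: "period = 2 * m" using even_period by blast
  define b where "b = (rot ^^ m) a"
  have "0 < m" "m < period" using period(1) m by simp_all
  then have "b \<noteq> a"
    using inj_onD[OF inj_on_rot_funpow, of m 0] by (auto simp: b_def)
  have "{c. (a, c) \<in> steps\<^sup>* \<and> \<beta> c = c} = {a, b}"
  proof (intro equalityI subsetI)
    fix c assume "c \<in> {c. (a, c) \<in> steps\<^sup>* \<and> \<beta> c = c}"
    then obtain k where k: "k < period" "c = (rot ^^ k) a" "\<beta> c = c" using steps_from_a_rot_funpow by blast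
    then have "(rot ^^ (period - k)) a = (rot ^^ k) a" using \<beta>_rot_funpow[of k] by simp
    then have "k = 0 \<or> period - k = k"
      using inj_onD[OF inj_on_rot_funpow, of "period - k" k] k(1) by (cases "k = 0") auto
    then have "k = 0 \<or> k = m" using m by linarith
    then show "c \<in> {a, b}" using k by (auto simp: b_def)
  next
    fix c assume "c \<in> {a, b}"
    moreover have "\<beta> b = b" using \<beta>_rot_funpow[of m] m by (simp add: b_def)
    ultimately show "c \<in> {c. (a, c) \<in> steps\<^sup>* \<and> \<beta> c = c}"
      using steps_rot_funpow[OF a_in, of m] \<beta>_a by (auto simp: b_def)
  qed
  with \<open>b \<noteq> a\<close> show ?thesis using that by blast
qed

end

lemma even_card_involution:
  assumes "\<And>x. x \<in> A \<Longrightarrow> h x \<in> A" "\<And>x. x \<in> A \<Longrightarrow> h (h x) = x" "\<And>x. x \<in> A \<Longrightarrow> h x \<noteq> x"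
  shows "even (card A)"
proof -
  have "(\<Sum>x\<in>A. 1 :: bit) = 0"
    by (rule sum_involution_eq_0[where h = h]) (use assms in auto)
  then have "of_nat (card A) = (0 :: bit)" by simp
  then show ?thesis by (metis even_of_nat_iff even_zero)
qed

locale pole_substitution =
  fixes M :: "('w, 'm) mpole" and H :: "'w \<Rightarrow> ('v, 'd) mpole" and CH :: "'w \<Rightarrow> nat \<Rightarrow> 'd set"
    and \<sigma> :: "'w \<Rightarrow> nat \<Rightarrow> 'm" and J :: "'m \<Rightarrow> 'd \<Rightarrow> 'd"
  assumes M_multipole: "multipole M"
    and H_pole: "x \<in> verts M \<Longrightarrow> pole222 (H x) (CH x)"
    and \<sigma>_bij: "x \<in> verts M \<Longrightarrow> bij_betw (\<sigma> x) {0..<3} {e \<in> darts M. inc M e = Some x}"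
    and J_bij: "e \<in> darts M \<Longrightarrow> inc M e \<noteq> None \<Longrightarrow> inc M (mate M e) \<noteq> None \<Longrightarrow>
      bij_betw (J e) (aconn M CH \<sigma> e) (aconn M CH \<sigma> (mate M e))"
    and J_inverse: "e \<in> darts M \<Longrightarrow> inc M e \<noteq> None \<Longrightarrow> inc M (mate M e) \<noteq> None \<Longrightarrow>
      d \<in> aconn M CH \<sigma> e \<Longrightarrow> J (mate M e) (J e d) = d"
begin

abbreviation conn :: "'m \<Rightarrow> 'd set" where
  "conn \<equiv> aconn M CH \<sigma>"

abbreviation H\<^sub>M :: "('w \<times> 'v, 'w \<times> 'd) mpole" where
  "H\<^sub>M \<equiv> HM M H CH \<sigma> J"

lemma M_mate:
  assumes "e \<in> darts M"
  shows "mate M e \<in> darts M" "mate M e \<noteq> e" "mate M (mate M e) = e"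
  using M_multipole assms by (auto simp: multipole_def)

lemma M_inc: "e \<in> darts M \<Longrightarrow> inc M e = Some x \<Longrightarrow> x \<in> verts M"
  using M_multipole by (auto simp: multipole_def)

lemma finite_verts_M: "finite (verts M)"
  using M_multipole by (simp add: multipole_def)

lemma H_multipole: "x \<in> verts M \<Longrightarrow> multipole (H x)"
  and H_cubic: "x \<in> verts M \<Longrightarrow> cubic (H x)"
  and CH_semiedges: "x \<in> verts M \<Longrightarrow> i < 3 \<Longrightarrow> CH x i \<subseteq> semiedges (H x)"
  and card_CH: "x \<in> verts M \<Longrightarrow> i < 3 \<Longrightarrow> card (CH x i) = 2"
  and CH_disjoint: "x \<in> verts M \<Longrightarrow> i < 3 \<Longrightarrow> j < 3 \<Longrightarrow> i \<noteq> j \<Longrightarrow> CH x i \<inter> CH x j = {}"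
  and CH_cover: "x \<in> verts M \<Longrightarrow> (\<Union>i<3. CH x i) = semiedges (H x)"
  using H_pole by (simp_all add: pole222_def)

lemma H_mate:
  assumes "x \<in> verts M" "d \<in> darts (H x)"
  shows "mate (H x) d \<in> darts (H x)" "mate (H x) d \<noteq> d" "mate (H x) (mate (H x) d) = d"
  using H_multipole assms by (auto simp: multipole_def)

lemma \<sigma>_end: "x \<in> verts M \<Longrightarrow> i < 3 \<Longrightarrow> \<sigma> x i \<in> darts M \<and> inc M (\<sigma> x i) = Some x"
  using bij_betwE[OF \<sigma>_bij] by fastforce

lemma end_eq_\<sigma>:
  assumes "e \<in> darts M" "inc M e = Some x"
  obtains i where "i < 3" "e = \<sigma> x i"
  using bij_betw_imp_surj_on[OF \<sigma>_bij[OF M_inc[OF assms]]] assms by force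

lemma conn_\<sigma>: "x \<in> verts M \<Longrightarrow> i < 3 \<Longrightarrow> conn (\<sigma> x i) = CH x i"
  using \<sigma>_end bij_betw_imp_inj_on[OF \<sigma>_bij] by (simp add: aconn_def the_inv_into_f_f)

lemma conn_semiedges:
  assumes "e \<in> darts M" "inc M e = Some x"
  shows "conn e \<subseteq> semiedges (H x)" "card (conn e) = 2"
  using CH_semiedges card_CH conn_\<sigma> M_inc[OF assms] by (metis assms end_eq_\<sigma>)+

lemma conn_dart:
  "e \<in> darts M \<Longrightarrow> inc M e = Some x \<Longrightarrow> d \<in> conn e \<Longrightarrow> d \<in> darts (H x) \<and> inc (H x) d = None"
  using conn_semiedges(1) by (auto simp: semiedges_def)

lemma conn_unique:
  assumes "e \<in> darts M" "inc M e = Some x" "e' \<in> darts M" "inc M e' = Some x"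
    and "d \<in> conn e" "d \<in> conn e'"
  shows "e = e'"
proof -
  obtain i j where "i < 3" "e = \<sigma> x i" "j < 3" "e' = \<sigma> x j"
    using end_eq_\<sigma> assms(1-4) by metis
  then show ?thesis
    using CH_disjoint[OF M_inc[OF assms(1,2)]] conn_\<sigma>[OF M_inc[OF assms(1,2)]] assms(5,6) by blast
qed

definition union_darts :: "('w \<times> 'd) set" where
  "union_darts = Sigma (verts M) (\<lambda>x. darts (H x))"

definition local_mate :: "'w \<times> 'd \<Rightarrow> 'w \<times> 'd" where
  "local_mate p = (fst p, mate (H (fst p)) (snd p))"

definition junction_end :: "'w \<Rightarrow> 'd \<Rightarrow> 'm" where
  "junction_end x d =
     (SOME e. e \<in> darts M \<and> inc M e = Some x \<and> inc M (mate M e) \<noteq> None \<and> d \<in> conn e)"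

definition glue :: "'w \<times> 'd \<Rightarrow> 'w \<times> 'd" where
  "glue p = (if joined M CH \<sigma> (fst p) (snd p)
     then (let e = junction_end (fst p) (snd p) in (the (inc M (mate M e)), J e (snd p)))
     else p)"

lemma junction_end:
  assumes "joined M CH \<sigma> x d"
  shows "junction_end x d \<in> darts M" "inc M (junction_end x d) = Some x"
    "inc M (mate M (junction_end x d)) \<noteq> None" "d \<in> conn (junction_end x d)"
proof -
  have "\<exists>e. e \<in> darts M \<and> inc M e = Some x \<and> inc M (mate M e) \<noteq> None \<and> d \<in> conn e"
    using assms by (auto simp: joined_def)
  from someI_ex[OF this] show "junction_end x d \<in> darts M" "inc M (junction_end x d) = Some x"
    "inc M (mate M (junction_end x d)) \<noteq> None" "d \<in> conn (junction_end x d)"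
    unfolding junction_end_def by blast+
qed

lemma joined_junction_end:
  assumes "e \<in> darts M" "inc M e = Some x" "inc M (mate M e) \<noteq> None" "d \<in> conn e"
  shows "joined M CH \<sigma> x d" "junction_end x d = e"
proof -
  show j: "joined M CH \<sigma> x d" using assms by (auto simp: joined_def)
  show "junction_end x d = e" using conn_unique junction_end[OF j] assms by blast
qed

lemma glue_joined:
  assumes "e \<in> darts M" "inc M e = Some x" "inc M (mate M e) = Some y" "d \<in> conn e"
  shows "glue (x, d) = (y, J e d)"
  using joined_junction_end[of e x d] assms by (simp add: glue_def)

lemma glue_unjoined: "\<not> joined M CH \<sigma> x d \<Longrightarrow> glue (x, d) = (x, d)"
  by (simp add: glue_def)

lemma joinedE:
  assumes "joined M CH \<sigma> x d"
  obtains e y where "e \<in> darts M" "inc M e = Some x" "inc M (mate M e) = Some y" "d \<in> conn e"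
  using junction_end[OF assms] by blast

lemma junction_partner:
  assumes "e \<in> darts M" "inc M e = Some x" "inc M (mate M e) = Some y" "d \<in> conn e"
  shows "J e d \<in> conn (mate M e)" "glue (y, J e d) = (x, d)" "(y, J e d) \<noteq> (x, d)"
proof -
  have e: "inc M e \<noteq> None" "inc M (mate M e) \<noteq> None" using assms by simp_all
  show J: "J e d \<in> conn (mate M e)" using bij_betwE[OF J_bij[OF assms(1) e]] assms(4) by blast
  show "glue (y, J e d) = (x, d)"
    using glue_joined[OF M_mate(1)[OF assms(1)] assms(3) _ J] M_mate[OF assms(1)] assms
      J_inverse[OF assms(1) e assms(4)] by simp
  show "(y, J e d) \<noteq> (x, d)"
    using conn_unique[OF M_mate(1)[OF assms(1)] _ assms(1,2) J] assms(3,4) M_mate(2)[OF assms(1)] by auto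
qed

lemma glue_fixed_iff: "glue (x, d) = (x, d) \<longleftrightarrow> \<not> joined M CH \<sigma> x d"
  by (metis glue_joined joinedE glue_unjoined junction_partner(3) junction_partner(2))

sublocale strands: involution_pair union_darts local_mate glue
proof
  show "finite union_darts"
    using finite_verts_M H_multipole by (auto simp: union_darts_def multipole_def)
  fix p assume p: "p \<in> union_darts"
  then obtain x d where xd: "p = (x, d)" "x \<in> verts M" "d \<in> darts (H x)"
    by (auto simp: union_darts_def)
  show "local_mate p \<in> union_darts" "local_mate (local_mate p) = p" "local_mate p \<noteq> p"
    using H_mate[OF xd(2,3)] xd by (auto simp: local_mate_def union_darts_def)
  show "glue p \<in> union_darts" "glue (glue p) = p"
  proof (atomize (full), cases "joined M CH \<sigma> x d")
    case True
    then obtain e y where e: "e \<in> darts M" "inc M e = Some x" "inc M (mate M e) = Some y" "d \<in> conn e"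
      by (rule joinedE)
    have "y \<in> verts M" using M_inc[OF M_mate(1)] e by blast
    then show "glue p \<in> union_darts \<and> glue (glue p) = p"
      using glue_joined[OF e] junction_partner[OF e] conn_dart[OF M_mate(1) e(3)] e(1) xd
      by (auto simp: union_darts_def)
  qed (use xd glue_unjoined p in auto)
qed

definition same_strand :: "'w \<times> 'd \<Rightarrow> 'w \<times> 'd \<Rightarrow> bool" where
  "same_strand p q \<longleftrightarrow> (p, q) \<in> (glink M H CH \<sigma> J)\<^sup>*"

lemma glink_rtrancl: "(glink M H CH \<sigma> J)\<^sup>* = strands.steps\<^sup>*"
proof
  have "glink M H CH \<sigma> J \<subseteq> strands.steps"
  proof
    fix l assume "l \<in> glink M H CH \<sigma> J"
    then consider x d where "l = ((x, d), local_mate (x, d))" "(x, d) \<in> union_darts"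
      | x d where "l = ((x, d), glue (x, d))" "(x, d) \<in> union_darts"
      using glue_joined conn_dart M_inc
      by (auto simp: glink_def local_mate_def union_darts_def)
    then show "l \<in> strands.steps" by cases (auto simp: strands.steps_def)
  qed
  then show "(glink M H CH \<sigma> J)\<^sup>* \<subseteq> strands.steps\<^sup>*" by (rule rtrancl_mono)
next
  have "strands.steps \<subseteq> (glink M H CH \<sigma> J)\<^sup>="
  proof
    fix l assume "l \<in> strands.steps"
    then obtain x d where "(x, d) \<in> union_darts"
      and "l = ((x, d), local_mate (x, d)) \<or> l = ((x, d), glue (x, d))"
      by (auto simp: strands.steps_def)
    then show "l \<in> (glink M H CH \<sigma> J)\<^sup>="
      using glue_unjoined joinedE glue_joined
      by (cases "joined M CH \<sigma> x d") (auto simp: glink_def local_mate_def union_darts_def, metis)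
  qed
  then show "strands.steps\<^sup>* \<subseteq> (glink M H CH \<sigma> J)\<^sup>*" by (metis rtrancl_mono rtrancl_reflcl)
qed

lemma same_strand_sym: "same_strand p q \<Longrightarrow> same_strand q p"
proof -
  have "sym strands.steps" by (rule symI) (rule strands.steps_sym)
  then show "same_strand p q \<Longrightarrow> same_strand q p"
    by (metis same_strand_def glink_rtrancl sym_rtrancl symD)
qed

lemma same_strand_trans: "same_strand p q \<Longrightarrow> same_strand q r \<Longrightarrow> same_strand p r"
  by (simp add: same_strand_def)

lemma darts_HM: "darts H\<^sub>M = {p \<in> union_darts. glue p = p}"
  by (auto simp: HM_def HM_darts_def union_darts_def glue_fixed_iff)

lemma strand_ends:
  assumes "a \<in> darts H\<^sub>M"
  obtains b where "b \<noteq> a" "{c \<in> darts H\<^sub>M. same_strand a c} = {a, b}"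
proof -
  interpret chain: involution_chain union_darts local_mate glue a
    using assms by unfold_locales (auto simp: darts_HM)
  obtain b where "b \<noteq> a" "{c. (a, c) \<in> strands.steps\<^sup>* \<and> glue c = c} = {a, b}"
    by (rule chain.chain_ends)
  moreover have "{c \<in> darts H\<^sub>M. same_strand a c} = {c. (a, c) \<in> strands.steps\<^sup>* \<and> glue c = c}"
    using strands.steps_closed[OF _ chain.a_in] by (auto simp: same_strand_def glink_rtrancl darts_HM)
  ultimately show ?thesis using that by simp
qed

lemma HM_mate_strand:
  assumes "a \<in> darts H\<^sub>M"
  shows "mate H\<^sub>M a \<noteq> a" "{c \<in> darts H\<^sub>M. same_strand a c} = {a, mate H\<^sub>M a}"
proof -
  obtain b where b: "b \<noteq> a" "{c \<in> darts H\<^sub>M. same_strand a c} = {a, b}"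
    using strand_ends[OF assms] .
  have "mate H\<^sub>M a = (THE b. b \<in> darts H\<^sub>M \<and> b \<noteq> a \<and> same_strand a b)"
    by (simp add: HM_def same_strand_def)
  also have "\<dots> = b"
    using b by (intro the_equality) blast+
  finally show "mate H\<^sub>M a \<noteq> a" "{c \<in> darts H\<^sub>M. same_strand a c} = {a, mate H\<^sub>M a}"
    using b by simp_all
qed

lemma HM_mate:
  assumes "a \<in> darts H\<^sub>M"
  shows "mate H\<^sub>M a \<in> darts H\<^sub>M" "mate H\<^sub>M a \<noteq> a" "mate H\<^sub>M (mate H\<^sub>M a) = a"
    and "same_strand a (mate H\<^sub>M a)"
proof -
  note strand_a = HM_mate_strand[OF assms]
  show a': "mate H\<^sub>M a \<in> darts H\<^sub>M" "same_strand a (mate H\<^sub>M a)" "mate H\<^sub>M a \<noteq> a"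
    using strand_a by blast+
  have "{c \<in> darts H\<^sub>M. same_strand (mate H\<^sub>M a) c} = {c \<in> darts H\<^sub>M. same_strand a c}"
    using a'(2) same_strand_sym same_strand_trans by blast
  then show "mate H\<^sub>M (mate H\<^sub>M a) = a"
    using HM_mate_strand[OF a'(1)] strand_a by auto
qed

lemma verts_HM: "verts H\<^sub>M = Sigma (verts M) (\<lambda>x. verts (H x))"
  by (simp add: HM_def)

lemma inc_HM: "inc H\<^sub>M (x, d) = map_option (Pair x) (inc (H x) d)"
  by (simp add: HM_def)

lemma dart_HM_iff: "(x, d) \<in> darts H\<^sub>M \<longleftrightarrow> x \<in> verts M \<and> d \<in> darts (H x) \<and> \<not> joined M CH \<sigma> x d"
  by (simp add: HM_def HM_darts_def)

lemma vertex_dart_HM: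
  assumes "x \<in> verts M" "d \<in> darts (H x)" "inc (H x) d = Some u"
  shows "(x, d) \<in> darts H\<^sub>M"
  using assms junction_end conn_dart by (metis dart_HM_iff option.distinct(1))

lemma multipole_HM: "multipole H\<^sub>M"
  unfolding multipole_def
proof (intro conjI ballI allI impI)
  show "finite (verts H\<^sub>M)"
    using finite_verts_M H_multipole by (auto simp: verts_HM multipole_def)
  show "finite (darts H\<^sub>M)"
    using strands.finite_U by (simp add: darts_HM)
next
  fix a assume a: "a \<in> darts H\<^sub>M"
  then show "mate H\<^sub>M a \<in> darts H\<^sub>M" "mate H\<^sub>M a \<noteq> a" "mate H\<^sub>M (mate H\<^sub>M a) = a"
    using HM_mate by simp_all
  fix w assume "inc H\<^sub>M a = Some w"
  then show "w \<in> verts H\<^sub>M"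
    using a H_multipole by (cases a) (auto simp: dart_HM_iff inc_HM verts_HM multipole_def)
qed

lemma cubic_HM: "cubic H\<^sub>M"
  unfolding cubic_def
proof
  fix w assume "w \<in> verts H\<^sub>M"
  then obtain x u where w: "w = (x, u)" "x \<in> verts M" "u \<in> verts (H x)"
    by (auto simp: verts_HM)
  have "{p \<in> darts H\<^sub>M. inc H\<^sub>M p = Some w} = Pair x ` {d \<in> darts (H x). inc (H x) d = Some u}"
    using w vertex_dart_HM by (auto simp: dart_HM_iff inc_HM)
  moreover have "card {d \<in> darts (H x). inc (H x) d = Some u} = 3"
    using H_cubic[OF w(2)] w(3) by (simp add: cubic_def)
  ultimately show "card {p \<in> darts H\<^sub>M. inc H\<^sub>M p = Some w} = 3"
    by (simp add: card_image inj_on_def)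
qed

text \<open>A strand without an end in \<open>H\<^sub>M\<close> is a closed cycle of free edges of the \<open>H x\<close>;
  it gets an arbitrary colour of \<open>K\<close>.\<close>
definition strand_colour :: "('w \<times> 'd \<Rightarrow> bit \<times> bit) \<Rightarrow> 'w \<times> 'd \<Rightarrow> bit \<times> bit" where
  "strand_colour \<phi> p = (if \<exists>b \<in> darts H\<^sub>M. same_strand p b
     then \<phi> (SOME b. b \<in> darts H\<^sub>M \<and> same_strand p b) else (0, 1))"

lemma strand_colour_cong:
  assumes "same_strand p q" shows "strand_colour \<phi> p = strand_colour \<phi> q"
proof -
  have "same_strand p b \<longleftrightarrow> same_strand q b" for b
    using assms same_strand_sym same_strand_trans by blast
  then show ?thesis by (simp add: strand_colour_def)
qed

lemma strand_colour_end:
  assumes \<phi>: "colouring H\<^sub>M \<phi>" and b: "b \<in> darts H\<^sub>M" "same_strand p b"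
  shows "strand_colour \<phi> p = \<phi> b"
proof -
  define b' where "b' = (SOME b. b \<in> darts H\<^sub>M \<and> same_strand p b)"
  have b': "b' \<in> darts H\<^sub>M" "same_strand p b'"
    using someI[of "\<lambda>b. b \<in> darts H\<^sub>M \<and> same_strand p b", OF conjI[OF b]] by (simp_all add: b'_def)
  then have "b' \<in> {b, mate H\<^sub>M b}"
    using HM_mate_strand(2)[OF b(1)] b(2) same_strand_sym same_strand_trans by blast
  then have "\<phi> b' = \<phi> b"
    using \<phi> b(1) by (auto simp: colouring_def)
  then show ?thesis using b by (auto simp: strand_colour_def b'_def)
qed

lemma strand_colour_in_K:
  assumes \<phi>: "colouring H\<^sub>M \<phi>" shows "strand_colour \<phi> p \<in> K"
proof (cases "\<exists>b \<in> darts H\<^sub>M. same_strand p b")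
  case True
  then obtain b where "b \<in> darts H\<^sub>M" "same_strand p b" by blast
  then show ?thesis using strand_colour_end[OF \<phi>] \<phi> by (simp add: colouring_def)
qed (simp add: strand_colour_def K_def)

lemma colouring_H_strand_colour:
  assumes \<phi>: "colouring H\<^sub>M \<phi>" and x: "x \<in> verts M"
  shows "colouring (H x) (\<lambda>d. strand_colour \<phi> (x, d))"
  unfolding colouring_def
proof (intro conjI ballI)
  fix d assume "d \<in> darts (H x)"
  then have "((x, d), (x, mate (H x) d)) \<in> glink M H CH \<sigma> J"
    using x by (auto simp: glink_def)
  then show "strand_colour \<phi> (x, mate (H x) d) = strand_colour \<phi> (x, d)"
    using strand_colour_cong same_strand_def by (metis r_into_rtrancl)
  show "strand_colour \<phi> (x, d) \<in> K" using strand_colour_in_K[OF \<phi>] .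
next
  fix u assume u: "u \<in> verts (H x)"
  let ?A = "{d \<in> darts (H x). inc (H x) d = Some u}"
  have "inj_on \<phi> {p \<in> darts H\<^sub>M. inc H\<^sub>M p = Some (x, u)}"
    using \<phi> x u by (simp add: colouring_def verts_HM)
  then have "inj_on \<phi> (Pair x ` ?A)"
    by (rule inj_on_subset) (auto simp: inc_HM intro: vertex_dart_HM[OF x])
  moreover have "strand_colour \<phi> (x, d) = \<phi> (x, d)" if "d \<in> ?A" for d
    using strand_colour_end[OF \<phi> vertex_dart_HM[OF x]] that by (auto simp: same_strand_def)
  ultimately show "inj_on (\<lambda>d. strand_colour \<phi> (x, d)) ?A"
    by (auto simp: inj_on_def)
qed

definition end_flow :: "('w \<times> 'd \<Rightarrow> bit \<times> bit) \<Rightarrow> 'm \<Rightarrow> bit \<times> bit" where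
  "end_flow \<phi> e = flow (\<lambda>d. strand_colour \<phi> (the (inc M e), d)) (conn e)"

lemma end_flow_mate:
  assumes e: "e \<in> darts M" "inc M e = Some x" "inc M (mate M e) = Some y"
  shows "end_flow \<phi> (mate M e) = end_flow \<phi> e"
proof -
  have "end_flow \<phi> (mate M e) = (\<Sum>d \<in> conn e. strand_colour \<phi> (y, J e d))"
    using sum.reindex_bij_betw[OF J_bij, of e "\<lambda>d. strand_colour \<phi> (y, d)"] e
    by (simp add: end_flow_def flow_def)
  also have "\<dots> = (\<Sum>d \<in> conn e. strand_colour \<phi> (x, d))"
  proof (rule sum.cong[OF refl])
    fix d assume "d \<in> conn e"
    then have "((x, d), (y, J e d)) \<in> glink M H CH \<sigma> J"
      using e by (auto simp: glink_def)
    then show "strand_colour \<phi> (y, J e d) = strand_colour \<phi> (x, d)"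
      by (metis r_into_rtrancl same_strand_def strand_colour_cong)
  qed
  also have "\<dots> = end_flow \<phi> e"
    using e by (simp add: end_flow_def flow_def)
  finally show ?thesis .
qed

lemma even_card_end_flows_at:
  assumes \<phi>: "colouring H\<^sub>M \<phi>" and x: "x \<in> verts M" and even: "even222 (H x) (CH x)"
  shows "even (card {e \<in> darts M. inc M e = Some x \<and> end_flow \<phi> e \<noteq> 0})"
proof -
  let ?I = "{i \<in> {0..<3}. flow (\<lambda>d. strand_colour \<phi> (x, d)) (CH x i) \<noteq> 0}"
  have flow_\<sigma>: "end_flow \<phi> (\<sigma> x i) = flow (\<lambda>d. strand_colour \<phi> (x, d)) (CH x i)" if "i < 3" for i
    using \<sigma>_end[OF x that] conn_\<sigma>[OF x that] by (simp add: end_flow_def)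
  have "{e \<in> darts M. inc M e = Some x \<and> end_flow \<phi> e \<noteq> 0} = \<sigma> x ` ?I"
  proof (intro equalityI subsetI)
    fix e assume e: "e \<in> {e \<in> darts M. inc M e = Some x \<and> end_flow \<phi> e \<noteq> 0}"
    then obtain i where "i < 3" "e = \<sigma> x i" by (blast elim: end_eq_\<sigma>)
    then show "e \<in> \<sigma> x ` ?I" using e flow_\<sigma> by auto
  qed (use \<sigma>_end[OF x] flow_\<sigma> in auto)
  moreover have "inj_on (\<sigma> x) ?I"
    using bij_betw_imp_inj_on[OF \<sigma>_bij[OF x]] by (rule inj_on_subset) auto
  moreover have "even (card ?I)"
    using even colouring_H_strand_colour[OF \<phi> x] by (simp add: even222_def)
  ultimately show ?thesis by (simp add: card_image)
qed

lemma even_card_dangling_end_flows: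
  assumes \<phi>: "colouring H\<^sub>M \<phi>" and even: "\<And>x. x \<in> verts M \<Longrightarrow> even222 (H x) (CH x)"
  shows "even (card {e \<in> darts M. inc M e \<noteq> None \<and> inc M (mate M e) = None \<and> end_flow \<phi> e \<noteq> 0})"
proof -
  define E where "E = {e \<in> darts M. inc M e \<noteq> None \<and> end_flow \<phi> e \<noteq> 0}"
  define E\<^sub>i where "E\<^sub>i = {e \<in> E. inc M (mate M e) \<noteq> None}"
  have fin: "finite (darts M)" using M_multipole by (simp add: multipole_def)
  have "E = (\<Union>x \<in> verts M. {e \<in> darts M. inc M e = Some x \<and> end_flow \<phi> e \<noteq> 0})"
    using M_inc by (auto simp: E_def)
  then have "card E = (\<Sum>x \<in> verts M. card {e \<in> darts M. inc M e = Some x \<and> end_flow \<phi> e \<noteq> 0})"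
    using fin finite_verts_M by (simp add: card_UN_disjoint disjoint_iff)
  then have "even (card E)"
    using even_card_end_flows_at[OF \<phi> _ even] by (simp add: dvd_sum)
  moreover have "even (card E\<^sub>i)"
  proof (rule even_card_involution[where h = "mate M"])
    fix e assume "e \<in> E\<^sub>i"
    then show "mate M e \<in> E\<^sub>i" "mate M (mate M e) = e" "mate M e \<noteq> e"
      using M_mate end_flow_mate by (auto simp: E\<^sub>i_def E_def)
  qed
  moreover have "card E = card E\<^sub>i + card {e \<in> E. inc M (mate M e) = None}"
    using fin by (subst card_Un_disjoint[symmetric]) (auto simp: E\<^sub>i_def E_def intro: arg_cong[where f = card])
  moreover have "{e \<in> E. inc M (mate M e) = None} =
      {e \<in> darts M. inc M e \<noteq> None \<and> inc M (mate M e) = None \<and> end_flow \<phi> e \<noteq> 0}"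
    by (auto simp: E_def)
  ultimately show ?thesis by simp
qed

end

locale pole_substitution_3pole = pole_substitution M H CH \<sigma> J
  for M :: "('w, 'm) mpole" and H :: "'w \<Rightarrow> ('v, 'd) mpole" and CH \<sigma> J +
  fixes s :: "nat \<Rightarrow> 'm" and v :: "nat \<Rightarrow> 'w"
  assumes s_inj: "inj_on s {0..<3}"
    and M_semiedges: "semiedges M = s ` {0..<3}"
    and dangling: "i < 3 \<Longrightarrow> inc M (mate M (s i)) = Some (v i)"
    and v_inj: "inj_on v {0..<3}"
begin

abbreviation S :: "nat \<Rightarrow> ('w \<times> 'd) set" where
  "S \<equiv> HM_conn M CH \<sigma> s"

lemma dangling_edge:
  assumes "i < 3"
  shows "s i \<in> darts M" "inc M (s i) = None" "mate M (s i) \<in> darts M" "v i \<in> verts M"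
proof -
  show s: "s i \<in> darts M" "inc M (s i) = None"
    using M_semiedges assms by (auto simp: semiedges_def)
  show "mate M (s i) \<in> darts M" using M_mate(1)[OF s(1)] .
  then show "v i \<in> verts M" using M_inc dangling[OF assms] by blast
qed

lemma S_eq: "i < 3 \<Longrightarrow> S i = Pair (v i) ` conn (mate M (s i))"
  by (simp add: HM_conn_def dangling)

lemma dangling_ends:
  "{e \<in> darts M. inc M e \<noteq> None \<and> inc M (mate M e) = None} = (\<lambda>i. mate M (s i)) ` {0..<3}"
proof (intro equalityI subsetI)
  fix e assume e: "e \<in> {e \<in> darts M. inc M e \<noteq> None \<and> inc M (mate M e) = None}"
  then have "mate M e \<in> semiedges M" using M_mate(1) by (simp add: semiedges_def)
  then obtain i where "i < 3" "mate M e = s i" using M_semiedges by auto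
  then show "e \<in> (\<lambda>i. mate M (s i)) ` {0..<3}"
    using e M_mate(3)[of e] by (intro image_eqI[of _ _ i]) auto
next
  fix e assume "e \<in> (\<lambda>i. mate M (s i)) ` {0..<3}"
  then obtain i where "i < 3" "e = mate M (s i)" by auto
  then show "e \<in> {e \<in> darts M. inc M e \<noteq> None \<and> inc M (mate M e) = None}"
    using dangling_edge[of i] dangling[of i] M_mate(3)[of "s i"] by simp
qed

lemma inj_on_dangling_ends: "inj_on (\<lambda>i. mate M (s i)) {0..<3}"
proof (rule inj_onI)
  fix i j assume ij: "i \<in> {0..<3}" "j \<in> {0..<3}" and "mate M (s i) = mate M (s j)"
  then have "s i = s j" using M_mate(3) dangling_edge(1) by (metis atLeastLessThan_iff)
  then show "i = j" using inj_onD[OF s_inj _ ij] by blast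
qed

lemma S_dart:
  assumes i: "i < 3" and d: "d \<in> conn (mate M (s i))"
  shows "(v i, d) \<in> darts H\<^sub>M" "inc H\<^sub>M (v i, d) = None"
proof -
  have "\<not> joined M CH \<sigma> (v i) d"
  proof
    assume "joined M CH \<sigma> (v i) d"
    then have "junction_end (v i) d = mate M (s i)"
      using junction_end conn_unique dangling_edge[OF i] dangling[OF i] d by metis
    then show False
      using junction_end(3)[OF \<open>joined M CH \<sigma> (v i) d\<close>] dangling_edge[OF i] M_mate(3) by simp
  qed
  then show "(v i, d) \<in> darts H\<^sub>M" "inc H\<^sub>M (v i, d) = None"
    using conn_dart dangling_edge[OF i] dangling[OF i] d by (auto simp: dart_HM_iff inc_HM)
qed

lemma semiedges_HM: "semiedges H\<^sub>M = (\<Union>i<3. S i)"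
proof (intro equalityI subsetI)
  fix p assume p: "p \<in> semiedges H\<^sub>M"
  then obtain x d where xd: "p = (x, d)" "x \<in> verts M" "d \<in> darts (H x)"
    "\<not> joined M CH \<sigma> x d" "inc (H x) d = None"
    by (cases p) (auto simp: semiedges_def dart_HM_iff inc_HM)
  then obtain j where j: "j < 3" "d \<in> CH x j"
    using CH_cover[OF xd(2)] by (auto simp: semiedges_def)
  let ?e = "\<sigma> x j"
  have e: "?e \<in> darts M" "inc M ?e = Some x" "d \<in> conn ?e"
    using \<sigma>_end[OF xd(2) j(1)] conn_\<sigma>[OF xd(2) j(1)] j(2) by simp_all
  then have "inc M (mate M ?e) = None"
    using joined_junction_end(1)[OF e(1,2) _ e(3)] xd(4) by blast
  then have "?e \<in> (\<lambda>i. mate M (s i)) ` {0..<3}"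
    using dangling_ends e(1,2) by blast
  then obtain i where i: "i < 3" "?e = mate M (s i)" by auto
  then have "x = v i" using e(2) dangling by simp
  then show "p \<in> (\<Union>i<3. S i)" using S_eq i e(3) xd(1) by auto
qed (use S_eq S_dart in \<open>auto simp: semiedges_def\<close>)

lemma pole222_HM: "pole222 H\<^sub>M S"
  unfolding pole222_def
proof (intro conjI multipole_HM cubic_HM semiedges_HM[symmetric] allI impI)
  fix i :: nat assume i: "i < 3"
  show "S i \<subseteq> semiedges H\<^sub>M" using semiedges_HM i by blast
  show "card (S i) = 2"
    using S_eq[OF i] conn_semiedges(2) dangling_edge(3)[OF i] dangling[OF i]
    by (simp add: card_image inj_on_def)
next
  fix i j :: nat assume "i < 3" "j < 3" "i \<noteq> j"
  then show "S i \<inter> S j = {}"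
    using S_eq v_inj by (auto simp: inj_on_def)
qed

lemma flow_S:
  assumes \<phi>: "colouring H\<^sub>M \<phi>" and i: "i < 3"
  shows "flow \<phi> (S i) = end_flow \<phi> (mate M (s i))"
proof -
  have "flow \<phi> (S i) = (\<Sum>d \<in> conn (mate M (s i)). \<phi> (v i, d))"
    by (simp add: S_eq[OF i] flow_def sum.reindex inj_on_def)
  also have "\<dots> = (\<Sum>d \<in> conn (mate M (s i)). strand_colour \<phi> (v i, d))"
    using strand_colour_end[OF \<phi> S_dart(1)[OF i]] by (simp add: same_strand_def)
  also have "\<dots> = end_flow \<phi> (mate M (s i))"
    using dangling[OF i] by (simp add: end_flow_def flow_def)
  finally show ?thesis .
qed

lemma even222_HM:
  assumes "\<And>x. x \<in> verts M \<Longrightarrow> even222 (H x) (CH x)"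
  shows "even222 H\<^sub>M S"
  unfolding even222_def
proof (intro allI impI)
  fix \<phi> assume \<phi>: "colouring H\<^sub>M \<phi>"
  let ?I = "{i \<in> {0..<3}. end_flow \<phi> (mate M (s i)) \<noteq> 0}"
  have "{e \<in> darts M. inc M e \<noteq> None \<and> inc M (mate M e) = None \<and> end_flow \<phi> e \<noteq> 0} =
      {e \<in> {e \<in> darts M. inc M e \<noteq> None \<and> inc M (mate M e) = None}. end_flow \<phi> e \<noteq> 0}"
    by auto
  also have "\<dots> = (\<lambda>i. mate M (s i)) ` ?I"
    unfolding dangling_ends by auto
  finally have "{e \<in> darts M. inc M e \<noteq> None \<and> inc M (mate M e) = None \<and> end_flow \<phi> e \<noteq> 0} =
      (\<lambda>i. mate M (s i)) ` ?I" .
  moreover have "card ((\<lambda>i. mate M (s i)) ` ?I) = card ?I"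
    by (rule card_image, rule inj_on_subset[OF inj_on_dangling_ends]) auto
  ultimately have "even (card ?I)"
    using even_card_dangling_end_flows[OF \<phi> assms] by simp
  moreover have "{i \<in> {0..<3}. flow \<phi> (S i) \<noteq> 0} = ?I"
    using flow_S[OF \<phi>] by auto
  ultimately show "even (card {i \<in> {0..<3}. flow \<phi> (S i) \<noteq> 0})" by simp
qed

end

theorem mainTheorem5:
  fixes M :: "('w,'m) mpole"
    and s :: "nat \<Rightarrow> 'm" and v :: "nat \<Rightarrow> 'w"
    and H :: "'w \<Rightarrow> ('v,'d) mpole" and CH :: "'w \<Rightarrow> nat \<Rightarrow> 'd set"
    and \<sigma> :: "'w \<Rightarrow> nat \<Rightarrow> 'm" and J :: "'m \<Rightarrow> 'd \<Rightarrow> 'd"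
  assumes M_mp: "multipole M" and M_cubic: "cubic M"
    and s_inj: "inj_on s {0..<3}"
    and M_semi: "semiedges M = s ` {0..<3}"
    and dangling: "\<forall>i<3. inc M (mate M (s i)) = Some (v i)"
    and v_inj: "inj_on v {0..<3}"
    and H_even: "\<forall>x\<in>verts M. pole222 (H x) (CH x) \<and> even222 (H x) (CH x)"
    and \<sigma>_bij: "\<forall>x\<in>verts M. bij_betw (\<sigma> x) {0..<3} {e\<in>darts M. inc M e = Some x}"
    and J_junction: "\<forall>e\<in>darts M. inc M e \<noteq> None \<longrightarrow> inc M (mate M e) \<noteq> None \<longrightarrow>
        bij_betw (J e) (aconn M CH \<sigma> e) (aconn M CH \<sigma> (mate M e)) \<and>
        (\<forall>d\<in>aconn M CH \<sigma> e. J (mate M e) (J e d) = d)"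
  shows "pole222 (HM M H CH \<sigma> J) (HM_conn M CH \<sigma> s) \<and>
         even222 (HM M H CH \<sigma> J) (HM_conn M CH \<sigma> s)"
proof -
  interpret pole_substitution_3pole M H CH \<sigma> J s v
    using M_mp s_inj M_semi dangling v_inj H_even \<sigma>_bij J_junction by unfold_locales auto
  show ?thesis using pole222_HM even222_HM H_even by blast
qed

end
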